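(* Let $n,m,v\ge1$, let $\Omega$ be a simple witness for a memory system $S(n,m,v)$, let $\lambda$ be a permutation of $\mathbb{N}_n$, and let $\tau,\tau'$ be unambiguous traces of $S(n,m,v)$ with $\tau'=\lambda^p(\tau)$. Then for all $1\le x,y\le|\tau|$ and all $1\le i\le m$: $\langle x,y\rangle\in\Omega^e(\tau,i)$ if and only if $\langle x,y\rangle\in\Omega^e(\tau',i)$.
   Context: $\mathbb{N}_n=\{1,\dots,n\}$, $\mathbb{W}_v=\{0,\dots,v\}$. Memory events $E(n,m,v)=\{R,W\}\times\mathbb{N}_n\times\mathbb{N}_m\times\mathbb{W}_v$; for $e=\langle a,b,c,d\rangle$, $op(e)=a$, $proc(e)=b$, $loc(e)=c$, $data(e)=d$; $0$ models the initial value of every location. A memory system $S(n,m,v)$ is a regular set of finite runs over an alphabet containing $E(n,m,v)$ (other letters being internal events); a trace is the subsequence of memory events of a run. For a sequence $\tau$ of memory events: $L(\tau,j)=\{k: loc(\tau(k))=j\}$, $L^w(\tau,j)=\{k\in L(\tau,j): op(\tau(k))=W\}$. A trace $\tau$ is unambiguous if for every location $j$ and $x\in L^w(\tau,j)$, $data(\tau(x))\ne0$ and $data(\tau(x))\ne data(\tau(y))$ for all $y\in L^w(\tau,j)\setminus\{x\}$. A witness $\Omega$ assigns to each trace $\tau$ and location $j$ a strict total order $\Omega(\tau,j)$ on $L^w(\tau,j)$; it is simple if $\langle x,y\rangle\in\Omega(\tau,j)$ iff $x<y$, for all $x,y\in L^w(\tau,j)$. For unambiguous $\tau$, $\Omega^e(\tau,j)\subseteq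 L(\tau,j)^2$: $\langle x,y\rangle\in\Omega^e(\tau,j)$ iff (1) $data(\tau(x))=data(\tau(y))$, $op(\tau(x))=W$, $op(\tau(y))=R$; or (2) $data(\tau(x))=0$ and $data(\tau(y))\ne0$; or (3) there are $a,b\in L^w(\tau,j)$ with $\langle a,b\rangle\in\Omega(\tau,j)$, $data(\tau(a))=data(\tau(x))$, $data(\tau(b))=data(\tau(y))$. For a permutation $\lambda$ of $\mathbb{N}_n$, $\lambda^p(\langle a,b,c,d\rangle)=\langle a,\lambda(b),c,d\rangle$, extended letterwise to sequences. *)

theory Defs
  imports Main "HOL-Combinatorics.Permutations"
begin

datatype mop = Rd | Wr

type_synonym event = "mop \<times> nat \<times> nat \<times> nat"

definition ev_op :: "event \<Rightarrow> mop" where "ev_op e = fst e"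
definition ev_proc :: "event \<Rightarrow> nat" where "ev_proc e = fst (snd e)"
definition ev_loc :: "event \<Rightarrow> nat" where "ev_loc e = fst (snd (snd e))"
definition ev_data :: "event \<Rightarrow> nat" where "ev_data e = snd (snd (snd e))"

definition mem_events :: "nat \<Rightarrow> nat \<Rightarrow> nat \<Rightarrow> event set" where
  "mem_events n m v = {(a,b,c,d). b \<in> {1..n} \<and> c \<in> {1..m} \<and> d \<in> {0..v}}"

datatype 'i letter = Mem event | Internal 'i

definition regular_over :: "'i letter set \<Rightarrow> 'i letter list set \<Rightarrow> bool" where
  "regular_over \<Sigma> L \<longleftrightarrow> finite \<Sigma> \<and>
     (\<exists>(Q :: nat set) q0 (\<delta> :: nat \<Rightarrow> 'i letter \<Rightarrow> nat) F.
        finite Q \<and> q0 \<in> Q \<and> F \<subseteq> Q \<and> (\<forall>q\<in>Q. \<forall>a\<in>\<Sigma>. \<delta> q a \<in> Q) \<and>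
        L = {w. set w \<subseteq> \<Sigma> \<and> foldl \<delta> q0 w \<in> F})"

definition memory_system :: "nat \<Rightarrow> nat \<Rightarrow> nat \<Rightarrow> 'i letter list set \<Rightarrow> bool" where
  "memory_system n m v S \<longleftrightarrow>
     (\<exists>\<Sigma>. \<Sigma> \<inter> range Mem = Mem ` mem_events n m v \<and> regular_over \<Sigma> S)"

fun trace :: "'i letter list \<Rightarrow> event list" where
  "trace [] = []"
| "trace (Mem e # r) = e # trace r"
| "trace (Internal _ # r) = trace r"

definition traces :: "'i letter list set \<Rightarrow> event list set" where
  "traces S = trace ` S"

definition at :: "event list \<Rightarrow> nat \<Rightarrow> event" where
  "at \<tau> k = \<tau> ! (k - 1)"

definition Lset :: "event list \<Rightarrow> nat \<Rightarrow> nat set" where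
  "Lset \<tau> j = {k. 1 \<le> k \<and> k \<le> length \<tau> \<and> ev_loc (at \<tau> k) = j}"

definition Lw :: "event list \<Rightarrow> nat \<Rightarrow> nat set" where
  "Lw \<tau> j = {k \<in> Lset \<tau> j. ev_op (at \<tau> k) = Wr}"

definition unambiguous :: "event list \<Rightarrow> bool" where
  "unambiguous \<tau> \<longleftrightarrow> (\<forall>j. \<forall>x\<in>Lw \<tau> j. ev_data (at \<tau> x) \<noteq> 0 \<and>
      (\<forall>y\<in>Lw \<tau> j - {x}. ev_data (at \<tau> x) \<noteq> ev_data (at \<tau> y)))"

type_synonym witness = "event list \<Rightarrow> nat \<Rightarrow> (nat \<times> nat) set"

definition witness_for :: "nat \<Rightarrow> 'i letter list set \<Rightarrow> witness \<Rightarrow> bool" where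
  "witness_for m S \<Omega> \<longleftrightarrow> (\<forall>\<tau>\<in>traces S. \<forall>j\<in>{1..m}.
      \<Omega> \<tau> j \<subseteq> Lw \<tau> j \<times> Lw \<tau> j \<and> strict_linear_order_on (Lw \<tau> j) (\<Omega> \<tau> j))"

definition simple_witness :: "nat \<Rightarrow> 'i letter list set \<Rightarrow> witness \<Rightarrow> bool" where
  "simple_witness m S \<Omega> \<longleftrightarrow> witness_for m S \<Omega> \<and>
     (\<forall>\<tau>\<in>traces S. \<forall>j\<in>{1..m}. \<forall>x\<in>Lw \<tau> j. \<forall>y\<in>Lw \<tau> j. (x,y) \<in> \<Omega> \<tau> j \<longleftrightarrow> x < y)"

text \<open>The extended relation Omega^e(tau,j) (meant for unambiguous tau).\<close>
definition Omega_e :: "witness \<Rightarrow> event list \<Rightarrow> nat \<Rightarrow> (nat \<times> nat) set" where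
  "Omega_e \<Omega> \<tau> j = {(x,y). x \<in> Lset \<tau> j \<and> y \<in> Lset \<tau> j \<and>
     ((ev_data (at \<tau> x) = ev_data (at \<tau> y) \<and> ev_op (at \<tau> x) = Wr \<and> ev_op (at \<tau> y) = Rd)
      \<or> (ev_data (at \<tau> x) = 0 \<and> ev_data (at \<tau> y) \<noteq> 0)
      \<or> (\<exists>a\<in>Lw \<tau> j. \<exists>b\<in>Lw \<tau> j. (a,b) \<in> \<Omega> \<tau> j \<and>
            ev_data (at \<tau> a) = ev_data (at \<tau> x) \<and> ev_data (at \<tau> b) = ev_data (at \<tau> y)))}"

definition perm_event :: "(nat \<Rightarrow> nat) \<Rightarrow> event \<Rightarrow> event" where
  "perm_event p e = (case e of (a,b,c,d) \<Rightarrow> (a, p b, c, d))"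

definition perm_trace :: "(nat \<Rightarrow> nat) \<Rightarrow> event list \<Rightarrow> event list" where
  "perm_trace p \<tau> = map (perm_event p) \<tau>"

end

theory Submission
  imports Defs
begin

text \<open>A processor permutation changes neither the operation, location nor data of any event,
  so it preserves the sets L and L^w position by position. A simple witness orders the writes
  of a trace by position alone, hence it assigns the same order to both traces, and Omega^e
  is built from nothing but these ingredients.\<close>

lemma perm_event_simps [simp]:
  "ev_op (perm_event p e) = ev_op e"
  "ev_loc (perm_event p e) = ev_loc e"
  "ev_data (perm_event p e) = ev_data e"
  by (cases e; simp add: perm_event_def ev_op_def ev_loc_def ev_data_def)+

lemma length_perm_trace [simp]: "length (perm_trace p \<tau>) = length \<tau>"
  by (simp add: perm_trace_def)

lemma at_perm_trace:
  assumes "1 \<le> k" and "k \<le> length \<tau>"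
  shows "at (perm_trace p \<tau>) k = perm_event p (at \<tau> k)"
  using assms by (simp add: at_def perm_trace_def)

lemma Lset_perm_trace [simp]: "Lset (perm_trace p \<tau>) j = Lset \<tau> j"
  by (auto simp: Lset_def at_perm_trace)

lemma Lw_perm_trace [simp]: "Lw (perm_trace p \<tau>) j = Lw \<tau> j"
  by (auto simp: Lw_def Lset_def at_perm_trace)

lemma simple_witness_eq:
  assumes "simple_witness m S \<Omega>" and "\<tau> \<in> traces S" and "j \<in> {1..m}"
  shows "\<Omega> \<tau> j = {(x, y). x \<in> Lw \<tau> j \<and> y \<in> Lw \<tau> j \<and> x < y}"
  using assms unfolding simple_witness_def witness_for_def by blast

lemma Lw_cong:
  assumes "Lset \<tau>' j = Lset \<tau> j"
    and "\<And>k. k \<in> Lset \<tau> j \<Longrightarrow> ev_op (at \<tau>' k) = ev_op (at \<tau> k)"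
  shows "Lw \<tau>' j = Lw \<tau> j"
  using assms by (auto simp: Lw_def)

lemma Omega_e_cong:
  assumes Lset: "Lset \<tau>' j = Lset \<tau> j"
    and op: "\<And>k. k \<in> Lset \<tau> j \<Longrightarrow> ev_op (at \<tau>' k) = ev_op (at \<tau> k)"
    and data: "\<And>k. k \<in> Lset \<tau> j \<Longrightarrow> ev_data (at \<tau>' k) = ev_data (at \<tau> k)"
    and order: "\<Omega> \<tau>' j = \<Omega> \<tau> j"
  shows "Omega_e \<Omega> \<tau>' j = Omega_e \<Omega> \<tau> j"
proof -
  have Lw: "Lw \<tau>' j = Lw \<tau> j"
    using Lset op by (rule Lw_cong)
  have data_Lw: "ev_data (at \<tau>' k) = ev_data (at \<tau> k)" if "k \<in> Lw \<tau> j" for k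
    using that data by (simp add: Lw_def)
  show ?thesis
    unfolding Omega_e_def Lset Lw order
    by (simp add: op data data_Lw cong: conj_cong bex_cong)
qed

lemma Omega_e_perm_trace:
  assumes "simple_witness m S \<Omega>"
    and "\<tau> \<in> traces S" and "perm_trace p \<tau> \<in> traces S" and "j \<in> {1..m}"
  shows "Omega_e \<Omega> (perm_trace p \<tau>) j = Omega_e \<Omega> \<tau> j"
proof (rule Omega_e_cong)
  show "\<Omega> (perm_trace p \<tau>) j = \<Omega> \<tau> j"
    using simple_witness_eq[OF assms(1,3,4)] simple_witness_eq[OF assms(1,2,4)] by simp
qed (auto simp: Lset_def at_perm_trace)

theorem lemma7p2:
  fixes n m v :: nat and S :: "'i letter list set" and \<Omega> :: witness
    and lam :: "nat \<Rightarrow> nat" and \<tau> \<tau>' :: "event list"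
  assumes "n \<ge> 1" and "m \<ge> 1" and "v \<ge> 1"
    and "memory_system n m v S"
    and "simple_witness m S \<Omega>"
    and "lam permutes {1..n}"
    and "\<tau> \<in> traces S" and "\<tau>' \<in> traces S"
    and "unambiguous \<tau>" and "unambiguous \<tau>'"
    and "\<tau>' = perm_trace lam \<tau>"
  shows "\<forall>x y i. 1 \<le> x \<and> x \<le> length \<tau> \<and> 1 \<le> y \<and> y \<le> length \<tau> \<and> 1 \<le> i \<and> i \<le> m \<longrightarrow>
           ((x, y) \<in> Omega_e \<Omega> \<tau> i \<longleftrightarrow> (x, y) \<in> Omega_e \<Omega> \<tau>' i)"
  using Omega_e_perm_trace[OF assms(5,7), of lam] assms(8,11) by auto

end
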